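(* Let $f_1,\dots,f_k:\mathbb{R}^n\to\mathbb{R}$ be continuously differentiable, and let $x\in\mathbb{R}^n$. Suppose vectors $\nabla\widetilde{f}_1(x),\dots,\nabla\widetilde{f}_k(x)\in\mathbb{R}^n$ satisfy $\|\nabla\widetilde{f}_i(x)-\nabla f_i(x)\|_2\le\epsilon_i$ for given $\epsilon_i\ge0$, and $\nabla\widetilde{f}_i(x)\neq0$ for $i=1,\dots,k$. Let $\widehat{\alpha}_1,\dots,\widehat{\alpha}_k\ge0$ with $\sum_{i=1}^k\widehat{\alpha}_i=1$, put $q_u(x)=-\sum_{j=1}^k\widehat{\alpha}_j\nabla\widetilde{f}_j(x)$, and assume $q_u(x)\neq0$. Then for each $i\in\{1,\dots,k\}$ the condition \[ \frac{q_u(x)\cdot\bigl(-\nabla\widetilde{f}_i(x)\bigr)}{\|q_u(x)\|_2\,\|\nabla\widetilde{f}_i(x)\|_2}\ \ge\ \frac{\epsilon_i}{\|\nabla\widetilde{f}_i(x)\|_2} \] is equivalent to \[ \widehat{\alpha}_i\ \ge\ \frac{1}{\|\nabla\widetilde{f}_i(x)\|_2^2}\Bigl(\|q_u(x)\|_2\,\epsilon_i-\sum_{j=1,\,j\neq i}^k\widehat{\alpha}_j\bigl(\nabla\widetilde{f}_j(x)\cdot\nabla\widetilde{f}_i(x)\bigr)\Bigr). \] In particular, if the latter inequality holds for all $i=1,\dots,k$, then $q_u(x)$ is a descent direction for all objectives, i.e. $-\nabla f_i(x)\cdot q_u(x)\ge0$ for $i=1,\dots,k$.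
   Context: Here $\nabla\widetilde{f}_i(x)$ are inexact approximations of the exact gradients $\nabla f_i(x)$ of the objectives of the multiobjective problem $\min_{x\in\mathbb{R}^n}(f_1(x),\dots,f_k(x))$. In the paper the first condition is phrased as $\gamma_i\ge\varphi_i$, where $\gamma_i=\frac{\pi}{2}-\arccos\bigl(\frac{q_u(x)\cdot(-\nabla\widetilde{f}_i(x))}{\|q_u(x)\|_2\|\nabla\widetilde{f}_i(x)\|_2}\bigr)$ is the angle between $q_u(x)$ and the hyperplane orthogonal to the $i$-th gradient, and $\varphi_i=\arcsin\bigl(\epsilon_i/\|\nabla\widetilde{f}_i(x)\|_2\bigr)$ is the worst-case angular deviation between exact and inexact gradient (when $\epsilon_i\le\|\nabla\widetilde f_i(x)\|_2$); $\gamma_i\ge\varphi_i$ is the same as the displayed cosine inequality. *)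

theory Defs
  imports "HOL-Analysis.Analysis"
begin

end

theory Submission
  imports Defs
begin

text \<open>Expanding \<open>q \<bullet> (- g\<^sub>i)\<close> gives \<open>\<alpha>\<^sub>i \<parallel>g\<^sub>i\<parallel>\<^sup>2 + \<Sum>\<^sub>j\<^sub>\<noteq>\<^sub>i \<alpha>\<^sub>j (g\<^sub>j \<bullet> g\<^sub>i)\<close>, so both conditions say
  \<open>q \<bullet> (- g\<^sub>i) \<ge> \<parallel>q\<parallel> \<epsilon>\<^sub>i\<close>. Since the exact gradient differs from \<open>g\<^sub>i\<close> by at most \<open>\<epsilon>\<^sub>i\<close>,
  Cauchy-Schwarz turns this margin into \<open>- \<nabla>f\<^sub>i(x) \<bullet> q \<ge> 0\<close>.\<close>

lemma inner_neg_weighted_sum_split: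
  fixes g :: "'i \<Rightarrow> 'a::real_inner"
  assumes "finite I" and "i \<in> I"
  shows "(- (\<Sum>j\<in>I. a j *\<^sub>R g j)) \<bullet> (- g i)
           = a i * (norm (g i))\<^sup>2 + (\<Sum>j\<in>I - {i}. a j * (g j \<bullet> g i))"
proof -
  have "(- (\<Sum>j\<in>I. a j *\<^sub>R g j)) \<bullet> (- g i) = (\<Sum>j\<in>I. a j * (g j \<bullet> g i))"
    by (simp add: inner_sum_left)
  also have "\<dots> = a i * (g i \<bullet> g i) + (\<Sum>j\<in>I - {i}. a j * (g j \<bullet> g i))"
    using assms by (simp add: sum.remove)
  finally show ?thesis
    by (simp add: power2_norm_eq_inner)
qed

lemma normalized_inner_ge_iff:
  fixes q g :: "'a::real_inner"
  assumes "q \<noteq> 0" and "g \<noteq> 0"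
  shows "q \<bullet> (- g) / (norm q * norm g) \<ge> e / norm g \<longleftrightarrow> q \<bullet> (- g) \<ge> norm q * e"
  using assms by (simp add: divide_simps mult.commute mult.left_commute)

lemma weight_ge_iff:
  fixes g :: "'a::real_inner"
  assumes "g \<noteq> 0"
  shows "a \<ge> (1 / (norm g)\<^sup>2) * (c - s) \<longleftrightarrow> a * (norm g)\<^sup>2 + s \<ge> c"
proof -
  have "(norm g)\<^sup>2 > 0"
    using assms by simp
  then have "a \<ge> (1 / (norm g)\<^sup>2) * (c - s) \<longleftrightarrow> a * (norm g)\<^sup>2 \<ge> c - s"
    by (simp add: divide_simps mult.commute)
  then show ?thesis
    by linarith
qed

lemma descent_of_inexact_gradient:
  fixes q g g' :: "'a::real_inner"
  assumes err: "norm (g' - g) \<le> e"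
    and margin: "q \<bullet> (- g') \<ge> norm q * e"
  shows "(- g) \<bullet> q \<ge> 0"
proof -
  have "\<bar>(g' - g) \<bullet> q\<bar> \<le> norm (g' - g) * norm q"
    by (rule Cauchy_Schwarz_ineq2)
  also have "\<dots> \<le> e * norm q"
    using err by (simp add: mult_right_mono)
  finally have "\<bar>(g' - g) \<bullet> q\<bar> \<le> norm q * e"
    by (simp add: mult.commute)
  moreover have "(- g) \<bullet> q = q \<bullet> (- g') + (g' - g) \<bullet> q"
    by (simp add: inner_diff_left inner_diff_right inner_commute)
  ultimately show ?thesis
    using margin by linarith
qed

theorem lemma2:
  fixes k :: nat
    and f :: "nat \<Rightarrow> real ^ 'n \<Rightarrow> real"
    and grad :: "nat \<Rightarrow> real ^ 'n \<Rightarrow> real ^ 'n"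
    and x :: "real ^ 'n"
    and gt :: "nat \<Rightarrow> real ^ 'n"
    and eps :: "nat \<Rightarrow> real"
    and alpha :: "nat \<Rightarrow> real"
    and q :: "real ^ 'n"
  assumes grad: "\<And>i y. i \<in> {1..k} \<Longrightarrow> (f i has_derivative (\<lambda>h. grad i y \<bullet> h)) (at y)"
    and grad_cont: "\<And>i. i \<in> {1..k} \<Longrightarrow> continuous_on UNIV (grad i)"
    and err: "\<And>i. i \<in> {1..k} \<Longrightarrow> norm (gt i - grad i x) \<le> eps i"
    and eps_nonneg: "\<And>i. i \<in> {1..k} \<Longrightarrow> eps i \<ge> 0"
    and gt_nz: "\<And>i. i \<in> {1..k} \<Longrightarrow> gt i \<noteq> 0"
    and alpha_nonneg: "\<And>i. i \<in> {1..k} \<Longrightarrow> alpha i \<ge> 0"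
    and alpha_sum: "(\<Sum>i=1..k. alpha i) = 1"
    and q_def: "q = - (\<Sum>j=1..k. alpha j *\<^sub>R gt j)"
    and q_nz: "q \<noteq> 0"
  shows "(\<forall>i\<in>{1..k}.
            (q \<bullet> (- gt i) / (norm q * norm (gt i)) \<ge> eps i / norm (gt i)
             \<longleftrightarrow>
             alpha i \<ge> (1 / (norm (gt i))\<^sup>2) *
               (norm q * eps i - (\<Sum>j\<in>{1..k} - {i}. alpha j * (gt j \<bullet> gt i)))))
       \<and> ((\<forall>i\<in>{1..k}. alpha i \<ge> (1 / (norm (gt i))\<^sup>2) *
               (norm q * eps i - (\<Sum>j\<in>{1..k} - {i}. alpha j * (gt j \<bullet> gt i))))
           \<longrightarrow> (\<forall>i\<in>{1..k}. (- grad i x) \<bullet> q \<ge> 0))"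
proof -
  have weight_iff_margin:
    "alpha i \<ge> (1 / (norm (gt i))\<^sup>2) *
        (norm q * eps i - (\<Sum>j\<in>{1..k} - {i}. alpha j * (gt j \<bullet> gt i)))
     \<longleftrightarrow> q \<bullet> (- gt i) \<ge> norm q * eps i" if i: "i \<in> {1..k}" for i
    using weight_ge_iff[OF gt_nz[OF i]] inner_neg_weighted_sum_split[OF _ i, of alpha gt]
    unfolding q_def[symmetric] by simp
  show ?thesis
    using weight_iff_margin normalized_inner_ge_iff[OF q_nz gt_nz]
      descent_of_inexact_gradient[OF err]
    by auto
qed

end
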